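(* Let $\mathcal{R}=\{z\in\mathbb{C}:\Re(z)>0\}$ and let $\Phi:\mathcal{R}\to\mathbb{C}$ be analytic and satisfy: (a) for all $0<a<b<\infty$, $\lim_{y\to\pm\infty} e^{-\pi|y|}\int_a^b\left|\frac{\Phi(x+iy)}{x+iy}\right|\mathrm{d}x=0$; (b) for every $\eta>0$, $\sup_{x\ge\eta}\int_{-\infty}^\infty\left|\frac{\Phi(x+iy)}{x+iy}\right|e^{-\pi|y|}\,\mathrm{d}y<\infty$; (c) $\lim_{x\to\infty}\int_{-\infty}^\infty\left|\frac{\Phi(x+iy)}{x+iy}\right|e^{-\pi|y|}\,\mathrm{d}y=0$. Let $\mathcal{K}(\Phi,z)=\lim_{N\to\infty}\left(\frac{\cos\pi z}{\pi}\right)\sum_{n=1}^N(-1)^n\left(\frac{\Phi(n-\frac12)}{z-n+\frac12}-\frac{\Phi(n-\frac12)}{z+n-\frac12}\right)$ (an entire function, the limit being uniform on compact sets). For $\beta>0$, $\beta-\frac12\notin\mathbb{Z}$ and $|\Re(z)|\neq\beta$, let $I(\beta,\Phi;z)=\frac{1}{2\pi i}\int_{\beta-i\infty}^{\beta+i\infty}\left(\frac{\cos\pi z}{\cos\pi w}\right)\left(\frac{2w}{z^2-w^2}\right)\Phi(w)\,\mathrm{d}w$. If $0<\beta<\frac12$, then $\Phi(z)-\mathcal{K}(\Phi,z)=I(\beta,\Phi;z)$ for all $z$ with $\Re(z)>\beta$, and $-\mathcal{K}(\Phi,z)=I(\beta,\Phi;z)$ for all $z$ with $|\Re(z)|<\beta$.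 *)

theory Defs
  imports "HOL-Analysis.Analysis"
begin

text \<open>The entire function z \<mapsto> cos(pi z)/(z - c), with its removable singularity
  at z = c filled in by its limit value -pi sin(pi c).\<close>
definition cos_div :: "complex \<Rightarrow> complex \<Rightarrow> complex" where
  "cos_div c z = (if z = c then - of_real pi * sin (of_real pi * c)
                  else cos (of_real pi * z) / (z - c))"

definition K_fun :: "(complex \<Rightarrow> complex) \<Rightarrow> complex \<Rightarrow> complex" where
  "K_fun \<Phi> z = lim (\<lambda>N. (1 / of_real pi) *
      (\<Sum>n=1..N. (-1) ^ n *
         (\<Phi> (of_nat n - 1/2) * cos_div (of_nat n - 1/2) z
          - \<Phi> (of_nat n - 1/2) * cos_div (- (of_nat n - 1/2)) z)))"

text \<open>I(beta, Phi; z) = (1/(2 pi i)) int_{beta - i inf}^{beta + i inf} ... dw, with w = beta + i y,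
  dw = i dy, so it equals (1/(2 pi)) int_R F(beta + i y) dy (absolutely convergent Lebesgue integral).\<close>
definition I_fun :: "real \<Rightarrow> (complex \<Rightarrow> complex) \<Rightarrow> complex \<Rightarrow> complex" where
  "I_fun \<beta> \<Phi> z = (1 / (2 * of_real pi * \<i>)) *
      (LINT y|lborel. \<i> * (let w = Complex \<beta> y in
          (cos (of_real pi * z) / cos (of_real pi * w)) * (2 * w / (z^2 - w^2)) * \<Phi> w))"

end

theory Submission
  imports Defs "HOL-Complex_Analysis.Complex_Analysis"
begin

text \<open>Fix z and integrate
  F(w) = (cos \<pi>z / cos \<pi>w) (2w / (z^2 - w^2)) \<Phi>(w)
  over the rectangle with vertical sides Re w = \<beta> and Re w = N and horizontal sides
  Im w = \<plusminus>T. Inside the half plane Re w > 0 the only poles of F are the half-integers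
  n - 1/2, where the residue is the n-th term of the series defining K(\<Phi>, z), and,
  if Re z > \<beta>, the point w = z, where the residue is -\<Phi>(z); the pole at w = -z lies
  to the left of the contour. Since |cos \<pi>w| grows like exp (\<pi> |Im w|), hypothesis (a) kills
  the horizontal sides as T \<rightarrow> \<infinity>, (b) makes both vertical integrals converge absolutely,
  and (c) kills the right side as N \<rightarrow> \<infinity>. At the half-integers z = m - 1/2 themselves
  both I(\<beta>, \<Phi>; z) and all but one term of the series vanish.\<close>

section \<open>Lower bounds for the cosine off the real axis\<close>

lemma norm_cos_squared_exp:
  "norm (cos w) ^ 2 = cos (Re w) ^ 2 + ((exp (Im w) - exp (- Im w)) / 2) ^ 2"
  by (simp add: norm_cos_squared exp_minus power_divide)

lemma norm_cos_ge_abs_cos_Re: "\<bar>cos (Re w)\<bar> * exp \<bar>Im w\<bar> / 2 \<le> norm (cos w)"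
proof -
  have "exp \<bar>Im w\<bar> \<le> exp (Im w) + exp (- Im w)"
    by (cases "Im w \<ge> 0") auto
  have "(\<bar>cos (Re w)\<bar> * exp \<bar>Im w\<bar> / 2) ^ 2 = cos (Re w) ^ 2 * (exp \<bar>Im w\<bar> / 2) ^ 2"
    by (simp add: power_mult_distrib power_divide)
  also have "\<dots> \<le> cos (Re w) ^ 2 * ((exp (Im w) + exp (- Im w)) / 2) ^ 2"
    using \<open>exp \<bar>Im w\<bar> \<le> _\<close> by (intro mult_left_mono power_mono) auto
  also have "\<dots> = cos (Re w) ^ 2 + cos (Re w) ^ 2 * ((exp (Im w) - exp (- Im w)) / 2) ^ 2"
    by (simp add: power2_eq_square field_simps exp_minus)
  also have "\<dots> \<le> norm (cos w) ^ 2"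
    unfolding norm_cos_squared_exp
    by (intro add_left_mono mult_left_le_one_le) (auto simp: abs_square_le_1)
  finally show ?thesis
    by (rule power2_le_imp_le) simp
qed

lemma norm_cos_ge_exp_Im:
  assumes "1 \<le> \<bar>Im w\<bar>"
  shows "exp \<bar>Im w\<bar> / 4 \<le> norm (cos w)"
proof -
  have "exp (- \<bar>Im w\<bar>) \<le> exp (-1)"
    using assms by simp
  also have "exp (-1 :: real) \<le> 1/2"
    using exp_ge_add_one_self[of 1] by (simp add: exp_minus field_simps)
  finally have small: "exp (- \<bar>Im w\<bar>) \<le> 1/2" .
  have large: "1 \<le> exp \<bar>Im w\<bar>"
    by simp
  from small large have "exp \<bar>Im w\<bar> / 4 \<le> (exp \<bar>Im w\<bar> - exp (- \<bar>Im w\<bar>)) / 2"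
    by argo
  also have "\<dots> = \<bar>(exp (Im w) - exp (- Im w)) / 2\<bar>"
    by (cases "Im w \<ge> 0") auto
  also have "\<dots> \<le> norm (cos w)"
    by (rule power2_le_imp_le) (auto simp: norm_cos_squared_exp power_divide)
  finally show ?thesis .
qed

lemma norm_cos_pi_ge_abs_cos:
  "\<bar>cos (pi * Re w)\<bar> / 2 * exp (pi * \<bar>Im w\<bar>) \<le> norm (cos (of_real pi * w))"
  using norm_cos_ge_abs_cos_Re[of "of_real pi * w"] by (simp add: abs_mult)

lemma norm_cos_pi_ge_exp:
  assumes "1 \<le> \<bar>Im w\<bar>"
  shows "1/4 * exp (pi * \<bar>Im w\<bar>) \<le> norm (cos (of_real pi * w))"
proof -
  have "1 * 1 \<le> pi * \<bar>Im w\<bar>"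
    using assms pi_gt3 by (intro mult_mono) auto
  then show ?thesis
    using norm_cos_ge_exp_Im[of "of_real pi * w"] by (simp add: abs_mult)
qed

definition I_integrand :: "(complex \<Rightarrow> complex) \<Rightarrow> complex \<Rightarrow> complex \<Rightarrow> complex" where
  "I_integrand \<Phi> z w = cos (of_real pi * z) / cos (of_real pi * w) * (2 * w / (z^2 - w^2)) * \<Phi> w"

definition vertical_integral :: "(complex \<Rightarrow> complex) \<Rightarrow> complex \<Rightarrow> real \<Rightarrow> complex" where
  "vertical_integral \<Phi> z x = (LINT y|lborel. \<i> * I_integrand \<Phi> z (Complex x y))"

lemma I_fun_eq_vertical_integral:
  "I_fun \<beta> \<Phi> z = vertical_integral \<Phi> z \<beta> / (2 * of_real pi * \<i>)"
  by (simp add: I_fun_def vertical_integral_def I_integrand_def Let_def)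

lemma norm_two_mult_div_diff_squares_le:
  fixes z w :: complex
  assumes "w \<noteq> 0" "\<delta> > 0" "\<delta> \<le> norm (z - w)" "\<delta> \<le> norm (z + w)"
  shows "norm (2 * w / (z^2 - w^2)) \<le> (8 + 8 * norm z ^ 2 / \<delta>^2) / norm w"
proof -
  have nw: "norm w > 0"
    using assms by simp
  have "norm (2 * w / (z^2 - w^2)) = 2 * norm w / (norm (z - w) * norm (z + w))"
    by (simp add: power2_eq_square square_diff_square_factored norm_divide norm_mult)
  also have "\<dots> \<le> (8 + 8 * norm z ^ 2 / \<delta>^2) / norm w"
  proof (cases "2 * norm z \<le> norm w")
    case True
    then have "norm w / 2 \<le> norm (z - w)" "norm w / 2 \<le> norm (z + w)"
      using norm_triangle_ineq2[of w z] norm_triangle_ineq2[of w "-z"]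
      by (simp_all add: norm_minus_commute add.commute)
    then have "2 * norm w / (norm (z - w) * norm (z + w)) \<le> 2 * norm w / (norm w / 2 * (norm w / 2))"
      using nw by (intro divide_left_mono mult_mono mult_pos_pos) auto
    also have "\<dots> \<le> (8 + 8 * norm z ^ 2 / \<delta>^2) / norm w"
      using nw by (simp add: field_simps)
    finally show ?thesis .
  next
    case False
    have "2 * norm w / (norm (z - w) * norm (z + w)) \<le> 2 * norm w / (\<delta> * \<delta>)"
      using nw assms by (intro divide_left_mono mult_mono mult_pos_pos) auto
    also have "\<dots> = 2 * norm w ^ 2 / \<delta>^2 / norm w"
      using nw by (simp add: field_simps power2_eq_square)
    also have "\<dots> \<le> (8 + 8 * norm z ^ 2 / \<delta>^2) / norm w"
    proof (intro divide_right_mono)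
      have "norm w ^ 2 \<le> (2 * norm z) ^ 2"
        using False nw by (intro power_mono) auto
      then show "2 * norm w ^ 2 / \<delta>^2 \<le> 8 + 8 * norm z ^ 2 / \<delta>^2"
        using assms by (simp add: divide_right_mono power_mult_distrib add_increasing)
    qed simp
    finally show ?thesis .
  qed
  finally show ?thesis .
qed

lemma norm_I_integrand_le:
  fixes z w :: complex
  assumes "w \<noteq> 0" "\<delta> > 0" "\<delta> \<le> norm (z - w)" "\<delta> \<le> norm (z + w)"
    and "m > 0" "m * exp (pi * \<bar>Im w\<bar>) \<le> norm (cos (of_real pi * w))"
  shows "norm (I_integrand \<Phi> z w) \<le> norm (cos (of_real pi * z)) / m * (8 + 8 * norm z ^ 2 / \<delta>^2)
            * (norm (\<Phi> w / w) * exp (- pi * \<bar>Im w\<bar>))"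
proof -
  define M where "M = 8 + 8 * norm z ^ 2 / \<delta>^2"
  define E where "E = exp (pi * \<bar>Im w\<bar>)"
  have "E > 0" "m * E > 0"
    using \<open>m > 0\<close> by (simp_all add: E_def)
  then have "0 < norm (cos (of_real pi * w))"
    using assms(6) unfolding E_def by linarith
  have "norm (I_integrand \<Phi> z w)
      = norm (cos (of_real pi * z)) / norm (cos (of_real pi * w)) * norm (2 * w / (z^2 - w^2)) * norm (\<Phi> w)"
    by (simp add: I_integrand_def norm_mult norm_divide)
  also have "\<dots> \<le> norm (cos (of_real pi * z)) / (m * E) * (M / norm w) * norm (\<Phi> w)"
    unfolding M_def
    by (intro mult_right_mono mult_mono divide_left_mono norm_two_mult_div_diff_squares_le)
       (use assms \<open>m * E > 0\<close> \<open>0 < norm (cos _)\<close> in \<open>auto simp: E_def\<close>)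
  also have "\<dots> = norm (cos (of_real pi * z)) / m * M * (norm (\<Phi> w / w) * exp (- pi * \<bar>Im w\<bar>))"
    using \<open>E > 0\<close> assms by (simp add: E_def norm_divide exp_minus field_simps)
  finally show ?thesis
    unfolding M_def .
qed

lemma I_integrand_holomorphic_on:
  assumes "\<Phi> holomorphic_on A" "\<And>w. w \<in> A \<Longrightarrow> cos (of_real pi * w) \<noteq> 0"
    and "z \<notin> A" "- z \<notin> A"
  shows "I_integrand \<Phi> z holomorphic_on A"
proof -
  have "z^2 - w^2 \<noteq> 0" if "w \<in> A" for w
    using that assms(3,4) by (auto simp: power2_eq_iff)
  then show ?thesis
    unfolding I_integrand_def by (intro holomorphic_intros assms(1)) (use assms(2) in auto)
qed

section \<open>Contour integrals along lines and rectangles, and residues\<close>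

lemma continuous_on_Complex_Re: "continuous_on A (\<lambda>x. Complex x y)"
  unfolding Complex_eq by (intro continuous_intros)

lemma continuous_on_Complex_Im: "continuous_on A (Complex x)"
  unfolding Complex_eq by (intro continuous_intros)

lemma contour_integral_linepath_same_Im:
  assumes "a < b"
  shows "contour_integral (linepath (Complex a t) (Complex b t)) f = integral {a..b} (\<lambda>x. f (Complex x t))"
proof -
  have "contour_integral (linepath (Complex a t) (Complex b t)) f =
         (Complex b t - Complex a t) * integral {0..1} (\<lambda>x. f (linepath (Complex a t) (Complex b t) x))"
    by (simp add: contour_integral_integral)
  also have "Complex b t - Complex a t = of_real (b - a)"
    by (simp add: complex_eq_iff)
  also have "(\<lambda>x. f (linepath (Complex a t) (Complex b t) x)) = (\<lambda>x. f (Complex (a + (b - a) * x) t))"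
    by (intro ext arg_cong[where f=f]) (simp add: linepath_def complex_eq_iff algebra_simps)
  also have "{0..1} = (\<lambda>x. x / (b - a)) ` {0..b - a}"
    using assms by simp
  also have "integral \<dots> (\<lambda>x. f (Complex (a + (b - a) * x) t)) =
             integral {a-a..b-a} (\<lambda>x. f (Complex (x + a) t)) / of_real (b - a)"
    using assms by (subst integral_stretch_real) (auto simp: scaleR_conv_of_real add_ac)
  also have "\<dots> = integral {a..b} (\<lambda>x. f (Complex x t)) / of_real (b - a)"
    by (subst integral_shift_real_ivl) (rule refl)
  finally show ?thesis
    using assms by simp
qed

lemma contour_integral_rectpath:
  assumes "continuous_on (path_image (rectpath a1 a3)) f"
  shows "contour_integral (rectpath a1 a3) f =
     contour_integral (linepath a1 (Complex (Re a3) (Im a1))) f +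
     contour_integral (linepath (Complex (Re a3) (Im a1)) a3) f -
     contour_integral (linepath (Complex (Re a1) (Im a3)) a3) f -
     contour_integral (linepath a1 (Complex (Re a1) (Im a3))) f"
proof -
  define a2 where "a2 = Complex (Re a3) (Im a1)"
  define a4 where "a4 = Complex (Re a1) (Im a3)"
  have "path_image (rectpath a1 a3) =
      closed_segment a1 a2 \<union> closed_segment a2 a3 \<union> closed_segment a3 a4 \<union> closed_segment a4 a1"
    by (simp add: rectpath_def Let_def path_image_join a2_def a4_def Un_assoc)
  then have cont: "continuous_on (closed_segment p q) f"
    if "(p, q) \<in> {(a1, a2), (a2, a3), (a3, a4), (a4, a1)}" for p q
    using that by (auto intro: continuous_on_subset[OF assms])
  have "contour_integral (rectpath a1 a3) f = contour_integral (linepath a1 a2) f +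
      contour_integral (linepath a2 a3) f + contour_integral (linepath a3 a4) f +
      contour_integral (linepath a4 a1) f"
    by (simp add: rectpath_def Let_def a2_def a4_def contour_integrable_joinI
        contour_integrable_continuous_linepath cont)
  also have "contour_integral (linepath a3 a4) f = - contour_integral (linepath a4 a3) f"
    by (rule contour_integral_reverse_linepath) (simp add: cont)
  also have "contour_integral (linepath a4 a1) f = - contour_integral (linepath a1 a4) f"
    by (rule contour_integral_reverse_linepath) (simp add: cont)
  finally show ?thesis
    by (simp add: a2_def a4_def)
qed

lemma Residue_theorem_rectpath:
  fixes f :: "complex \<Rightarrow> complex"
  assumes "open S" "connected S" "cbox a1 a3 \<subseteq> S" "Re a1 \<le> Re a3" "Im a1 \<le> Im a3"
    and "finite pts" "pts \<subseteq> box a1 a3" "f holomorphic_on S - pts"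
  shows "contour_integral (rectpath a1 a3) f = 2 * pi * \<i> * (\<Sum>p\<in>pts. residue f p)"
proof -
  have img: "path_image (rectpath a1 a3) = cbox a1 a3 - box a1 a3"
    using assms(4,5) by (rule path_image_rectpath_cbox_minus_box)
  have "contour_integral (rectpath a1 a3) f =
      2 * pi * \<i> * (\<Sum>p\<in>pts. winding_number (rectpath a1 a3) p * residue f p)"
    by (rule Residue_theorem[OF assms(1,2,6,8)])
       (use assms img in \<open>auto intro!: winding_number_rectpath_outside\<close>)
  also have "(\<Sum>p\<in>pts. winding_number (rectpath a1 a3) p * residue f p) = (\<Sum>p\<in>pts. residue f p)"
    using assms(7) by (intro sum.cong) (auto simp: winding_number_rectpath)
  finally show ?thesis .
qed

lemma holomorphic_on_punctured_open_Diff: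
  assumes "open S" "finite pts" "f holomorphic_on S - pts" "p \<in> S"
  shows "open (S - (pts - {p}))" "p \<in> S - (pts - {p})" "f holomorphic_on S - (pts - {p}) - {p}"
  using assms by (auto intro!: open_Diff finite_imp_closed simp: Diff_insert [symmetric] insert_absorb)

lemma tendsto_contour_integral_vertical_linepath:
  fixes f :: "complex \<Rightarrow> complex"
  assumes int: "integrable lborel (\<lambda>y. f (Complex x y))"
  shows "((\<lambda>T. contour_integral (linepath (Complex x (-T)) (Complex x T)) f)
           \<longlongrightarrow> (LINT y|lborel. \<i> * f (Complex x y))) at_top"
proof -
  define g where "g y = \<i> * f (Complex x y)" for y
  have "integrable lborel g"
    unfolding g_def using int by (rule integrable_mult_right)
  have lim: "((\<lambda>T. LINT y|lborel. indicator {-T..T} y *\<^sub>R g y) \<longlongrightarrow> (LINT y|lborel. g y)) at_top"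
  proof (rule integral_dominated_convergence_at_top[where w="\<lambda>y. norm (g y)"])
    show "AE y in lborel. ((\<lambda>T. indicator {-T..T} y *\<^sub>R g y) \<longlongrightarrow> g y) at_top"
    proof (rule AE_I2)
      fix y
      have "\<forall>\<^sub>F T in at_top. g y = indicator {-T..T} y *\<^sub>R g y"
        using eventually_ge_at_top[of "\<bar>y\<bar>"] by eventually_elim (auto simp: indicator_def)
      then show "((\<lambda>T. indicator {-T..T} y *\<^sub>R g y) \<longlongrightarrow> g y) at_top"
        by (rule Lim_transform_eventually[OF tendsto_const])
    qed
    show "\<forall>\<^sub>F T in at_top. AE y in lborel. norm (indicator {-T..T} y *\<^sub>R g y) \<le> norm (g y)"
      by (intro always_eventually allI AE_I2) (auto simp: indicator_def)
  qed (use \<open>integrable lborel g\<close> in auto)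
  have "\<forall>\<^sub>F T in at_top. (LINT y:{-T..T}|lborel. g y) =
      contour_integral (linepath (Complex x (-T)) (Complex x T)) f"
    using eventually_gt_at_top[of 0]
  proof eventually_elim
    case (elim T)
    have "set_integrable lborel {-T..T} (\<lambda>y. f (Complex x y))"
      unfolding set_integrable_def by (rule integrable_mult_indicator[OF _ int]) simp
    have "contour_integral (linepath (Complex x (-T)) (Complex x T)) f
        = \<i> * integral {-T..T} (\<lambda>y. f (Complex x y))"
      by (rule contour_integral_linepath_same_Re) (use elim in auto)
    also have "integral {-T..T} (\<lambda>y. f (Complex x y)) = (LINT y:{-T..T}|lborel. f (Complex x y))"
      by (rule set_borel_integral_eq_integral(2)[symmetric]) fact
    also have "\<i> * \<dots> = (LINT y:{-T..T}|lborel. g y)"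
      unfolding g_def by (rule set_integral_mult_right[symmetric])
    finally show ?case ..
  qed
  from Lim_transform_eventually[OF lim[folded set_lebesgue_integral_def] this] show ?thesis
    by (simp add: g_def)
qed

lemma residue_div_cos_pi:
  fixes h :: "complex \<Rightarrow> complex"
  assumes "open s" "c \<in> s" "(\<lambda>w. h w / cos (of_real pi * w)) holomorphic_on s - {c}"
    and "isCont h c" "cos (of_real pi * c) = 0"
  shows "residue (\<lambda>w. h w / cos (of_real pi * w)) c = - h c / (of_real pi * sin (of_real pi * c))"
proof (rule residue_simple'[OF assms(1-3)])
  define D where "D = - of_real pi * sin (of_real pi * c)"
  have "sin (of_real pi * c) \<noteq> 0"
    using sin_cos_squared_add[of "of_real pi * c"] assms(5) by auto
  then have "D \<noteq> 0"
    by (simp add: D_def)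
  have "((\<lambda>w. cos (of_real pi * w)) has_field_derivative D) (at c)"
    unfolding D_def by (auto intro!: derivative_eq_intros)
  then have "((\<lambda>w. cos (of_real pi * w) / (w - c)) \<longlongrightarrow> D) (at c)"
    using assms(5) by (simp add: has_field_derivative_iff)
  then have "((\<lambda>w. h w * inverse (cos (of_real pi * w) / (w - c))) \<longlongrightarrow> h c * inverse D) (at c)"
    using assms(4) \<open>D \<noteq> 0\<close> by (intro tendsto_intros) (auto simp: isCont_def)
  moreover have "h c * inverse D = - h c / (of_real pi * sin (of_real pi * c))"
    by (simp add: D_def divide_inverse mult_ac)
  moreover have "h w * inverse (cos (of_real pi * w) / (w - c)) = h w / cos (of_real pi * w) * (w - c)"
    for w
    by (simp add: divide_inverse mult_ac)
  ultimately show "((\<lambda>w. h w / cos (of_real pi * w) * (w - c))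
      \<longlongrightarrow> - h c / (of_real pi * sin (of_real pi * c))) (at c)"
    by simp
qed

lemma residue_mult_two_mult_div_diff_squares:
  fixes g :: "complex \<Rightarrow> complex"
  assumes "open s" "z \<in> s" "(\<lambda>w. g w * (2 * w / (z^2 - w^2))) holomorphic_on s - {z}"
    and "isCont g z" "z \<noteq> 0"
  shows "residue (\<lambda>w. g w * (2 * w / (z^2 - w^2))) z = - g z"
proof (rule residue_simple'[OF assms(1-3)])
  have "z + z \<noteq> 0"
    using assms(5) by (simp add: complex_eq_iff)
  then have "((\<lambda>w. - (g w * (2 * w / (z + w)))) \<longlongrightarrow> - (g z * (2 * z / (z + z)))) (at z)"
    using assms(4) by (intro tendsto_intros) (auto simp: isCont_def)
  moreover have "- (g w * (2 * w / (z + w))) = g w * (2 * w / (z^2 - w^2)) * (w - z)" if "w \<noteq> z" for w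
  proof -
    have "z^2 - w^2 = - ((w - z) * (z + w))"
      by (simp add: algebra_simps power2_eq_square)
    with that show ?thesis
      by (simp add: divide_simps)
  qed
  then have "\<forall>\<^sub>F w in at z. - (g w * (2 * w / (z + w))) = g w * (2 * w / (z^2 - w^2)) * (w - z)"
    by (auto simp: eventually_at_filter)
  moreover have "- (g z * (2 * z / (z + z))) = - g z"
    using \<open>z + z \<noteq> 0\<close> by (simp add: field_simps)
  ultimately show "((\<lambda>w. g w * (2 * w / (z^2 - w^2)) * (w - z)) \<longlongrightarrow> - g z) (at z)"
    using Lim_transform_eventually by fastforce
qed

section \<open>The half-integer poles and the series K\<close>

definition sec_pole :: "nat \<Rightarrow> complex" where
  "sec_pole n = of_nat n - 1/2"

lemma Re_sec_pole [simp]: "Re (sec_pole n) = real n - 1/2"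
  and Im_sec_pole [simp]: "Im (sec_pole n) = 0"
  by (simp_all add: sec_pole_def)

lemma inj_sec_pole: "inj sec_pole"
  by (auto simp: inj_def sec_pole_def)

lemma of_real_pi_mult_sec_pole: "of_real pi * sec_pole n = of_real (real n * pi - pi / 2)"
  by (simp add: sec_pole_def algebra_simps)

lemma cos_pi_sec_pole [simp]: "cos (of_real pi * sec_pole n) = 0"
  by (simp only: of_real_pi_mult_sec_pole cos_of_real cos_diff) simp

lemma sin_pi_sec_pole [simp]: "sin (of_real pi * sec_pole n) = - ((-1) ^ n)"
  by (simp only: of_real_pi_mult_sec_pole sin_of_real sin_diff) simp

lemma cos_pi_eq_0_iff:
  fixes w :: complex
  shows "cos (of_real pi * w) = 0 \<longleftrightarrow> (\<exists>k::int. w = of_int k + 1/2)"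
proof -
  have "of_real pi * w = complex_of_real (of_int k * pi) + of_real pi / 2 \<longleftrightarrow> w = of_int k + 1/2"
    for k :: int
  proof -
    have "complex_of_real (of_int k * pi) + of_real pi / 2 = of_real pi * (of_int k + 1/2)"
      by (simp add: algebra_simps)
    then show ?thesis
      by auto
  qed
  then show ?thesis
    by (simp add: cos_eq_0)
qed

lemma cos_pi_eq_0_imp_sec_pole:
  assumes "0 < Re w" "cos (of_real pi * w) = 0"
  obtains n where "1 \<le> n" "w = sec_pole n"
proof -
  obtain k :: int where w: "w = of_int k + 1/2"
    using assms(2) by (auto simp: cos_pi_eq_0_iff)
  with assms(1) have "0 \<le> k"
    by simp
  then show ?thesis
    by (intro that[of "Suc (nat k)"]) (auto simp: w sec_pole_def)
qed

lemma cos_pi_neq_0_if_abs_Re_less: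
  assumes "\<bar>Re z\<bar> < 1/2"
  shows "cos (of_real pi * z) \<noteq> 0"
proof
  assume "cos (of_real pi * z) = 0"
  then obtain k :: int where "z = of_int k + 1/2"
    by (auto simp: cos_pi_eq_0_iff)
  with assms have "\<bar>real_of_int k + 1/2\<bar> < 1/2"
    by simp
  then have "- 1 < real_of_int k" "real_of_int k < 0"
    by linarith+
  then show False
    by simp
qed

definition K_term :: "(complex \<Rightarrow> complex) \<Rightarrow> complex \<Rightarrow> nat \<Rightarrow> complex" where
  "K_term \<Phi> z n = 1 / of_real pi * ((-1) ^ n *
      (\<Phi> (of_nat n - 1/2) * cos_div (of_nat n - 1/2) z
       - \<Phi> (of_nat n - 1/2) * cos_div (- (of_nat n - 1/2)) z))"

lemma K_fun_eq_lim_K_term: "K_fun \<Phi> z = lim (\<lambda>N. \<Sum>n=1..N. K_term \<Phi> z n)"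
  by (simp add: K_fun_def K_term_def sum_distrib_left)

lemma K_term_eq:
  assumes "cos (of_real pi * z) \<noteq> 0"
  shows "K_term \<Phi> z n = (-1) ^ n / of_real pi * cos (of_real pi * z)
      * (2 * sec_pole n / (z^2 - sec_pole n ^ 2)) * \<Phi> (sec_pole n)"
proof -
  define c where "c = sec_pole n"
  have "cos (of_real pi * c) = 0" "cos (of_real pi * - c) = 0"
    by (simp_all add: c_def)
  then have "z - c \<noteq> 0" "z + c \<noteq> 0"
    using assms by (auto simp: add_eq_0_iff)
  moreover have "z^2 - c^2 = (z - c) * (z + c)"
    by (simp add: algebra_simps power2_eq_square)
  ultimately have "1 / (z - c) - 1 / (z + c) = 2 * c / (z^2 - c^2)"
    by (simp add: field_simps)
  moreover have "cos_div c z - cos_div (- c) z = cos (of_real pi * z) * (1 / (z - c) - 1 / (z + c))"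
    using \<open>z - c \<noteq> 0\<close> \<open>z + c \<noteq> 0\<close> by (auto simp: cos_div_def add_eq_0_iff right_diff_distrib)
  ultimately have "cos_div c z - cos_div (- c) z = cos (of_real pi * z) * (2 * c / (z^2 - c^2))"
    by simp
  then show ?thesis
    by (simp add: K_term_def sec_pole_def [symmetric] c_def right_diff_distrib [symmetric])
qed

lemma K_term_at_sec_pole:
  assumes "1 \<le> m" "1 \<le> n"
  shows "K_term \<Phi> (sec_pole m) n = (if n = m then \<Phi> (sec_pole m) else 0)"
proof -
  have "sec_pole m \<noteq> - sec_pole n"
    using assms by (auto simp: complex_eq_iff)
  then have "cos_div (- sec_pole n) (sec_pole m) = 0"
    by (simp add: cos_div_def)
  moreover have "cos_div (sec_pole n) (sec_pole m) = (if n = m then of_real pi * (-1) ^ m else 0)"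
    using inj_sec_pole by (auto simp: cos_div_def inj_def)
  moreover have "(-1::complex) ^ m * (-1) ^ m = 1"
    by (simp flip: power_mult_distrib)
  ultimately show ?thesis
    by (simp add: K_term_def sec_pole_def [symmetric] mult.assoc [symmetric])
qed

lemma K_fun_at_sec_pole:
  assumes "1 \<le> m"
  shows "K_fun \<Phi> (sec_pole m) = \<Phi> (sec_pole m)"
proof -
  have "\<forall>\<^sub>F N in sequentially. \<Phi> (sec_pole m) = (\<Sum>n=1..N. K_term \<Phi> (sec_pole m) n)"
    using eventually_ge_at_top[of m]
    by eventually_elim (use assms in \<open>simp add: K_term_at_sec_pole\<close>)
  then have "(\<lambda>N. \<Sum>n=1..N. K_term \<Phi> (sec_pole m) n) \<longlonglongrightarrow> \<Phi> (sec_pole m)"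
    by (rule Lim_transform_eventually[OF tendsto_const])
  then show ?thesis
    unfolding K_fun_eq_lim_K_term by (rule limI)
qed

lemma residue_I_integrand_sec_pole:
  assumes "open s" "sec_pole n \<in> s" "I_integrand \<Phi> z holomorphic_on s - {sec_pole n}"
    and "isCont \<Phi> (sec_pole n)" "cos (of_real pi * z) \<noteq> 0"
  shows "residue (I_integrand \<Phi> z) (sec_pole n) = K_term \<Phi> z n"
proof -
  define h where "h w = cos (of_real pi * z) * (2 * w / (z^2 - w^2)) * \<Phi> w" for w
  have F: "I_integrand \<Phi> z = (\<lambda>w. h w / cos (of_real pi * w))"
    by (auto simp: I_integrand_def h_def)
  have "z^2 - sec_pole n ^ 2 \<noteq> 0"
    using assms(5) by (auto simp: power2_eq_iff)
  then have "isCont h (sec_pole n)"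
    unfolding h_def using assms(4) by (intro continuous_intros) auto
  then have "residue (I_integrand \<Phi> z) (sec_pole n) = - h (sec_pole n) / (of_real pi * - ((-1) ^ n))"
    unfolding F by (subst residue_div_cos_pi[OF assms(1,2)]) (use assms(3) F in auto)
  also have "\<dots> = K_term \<Phi> z n"
    unfolding K_term_eq[OF assms(5)] h_def by (cases "even n") (simp_all add: field_simps)
  finally show ?thesis .
qed

lemma residue_I_integrand_self:
  assumes "open s" "z \<in> s" "I_integrand \<Phi> z holomorphic_on s - {z}"
    and "isCont \<Phi> z" "cos (of_real pi * z) \<noteq> 0" "z \<noteq> 0"
  shows "residue (I_integrand \<Phi> z) z = - \<Phi> z"
proof -
  define g where "g w = cos (of_real pi * z) / cos (of_real pi * w) * \<Phi> w" for w
  have F: "I_integrand \<Phi> z = (\<lambda>w. g w * (2 * w / (z^2 - w^2)))"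
    by (auto simp: I_integrand_def g_def)
  have "isCont g z"
    unfolding g_def using assms(4,5) by (intro continuous_intros) auto
  have "residue (I_integrand \<Phi> z) z = - g z"
    unfolding F
    by (rule residue_mult_two_mult_div_diff_squares[OF assms(1,2) _ \<open>isCont g z\<close> assms(6)])
       (use assms(3) in \<open>simp add: F\<close>)
  then show ?thesis
    using assms(5) by (simp add: g_def)
qed

section \<open>Estimates under the hypotheses on \<Phi>\<close>

locale admissible =
  fixes \<Phi> :: "complex \<Rightarrow> complex"
  assumes holo: "\<Phi> holomorphic_on {z. Re z > 0}"
    and cond_a: "\<And>a b. 0 < a \<Longrightarrow> a < b \<Longrightarrow>
        ((\<lambda>y. ennreal (exp (- pi * \<bar>y\<bar>)) *
            (\<integral>\<^sup>+ x\<in>{a..b}. ennreal (cmod (\<Phi> (Complex x y) / Complex x y)) \<partial>lborel))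
          \<longlongrightarrow> 0) at_top
      \<and> ((\<lambda>y. ennreal (exp (- pi * \<bar>y\<bar>)) *
            (\<integral>\<^sup>+ x\<in>{a..b}. ennreal (cmod (\<Phi> (Complex x y) / Complex x y)) \<partial>lborel))
          \<longlongrightarrow> 0) at_bot"
    and cond_b: "\<And>\<eta>. \<eta> > 0 \<Longrightarrow>
        (SUP x\<in>{\<eta>..}. \<integral>\<^sup>+ y. ennreal (cmod (\<Phi> (Complex x y) / Complex x y) * exp (- pi * \<bar>y\<bar>)) \<partial>lborel) < \<infinity>"
    and cond_c: "((\<lambda>x. \<integral>\<^sup>+ y. ennreal (cmod (\<Phi> (Complex x y) / Complex x y) * exp (- pi * \<bar>y\<bar>)) \<partial>lborel)
          \<longlongrightarrow> 0) at_top"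
begin

definition damped_norm :: "real \<Rightarrow> real \<Rightarrow> real" where
  "damped_norm x y = cmod (\<Phi> (Complex x y) / Complex x y) * exp (- pi * \<bar>y\<bar>)"

lemma damped_norm_nonneg: "0 \<le> damped_norm x y"
  by (simp add: damped_norm_def)

lemma continuous_on_Phi: "continuous_on {w. 0 < Re w} \<Phi>"
  using holo by (rule holomorphic_on_imp_continuous_on)

lemma isCont_Phi: "0 < Re w \<Longrightarrow> isCont \<Phi> w"
  using continuous_on_Phi
  by (subst (asm) continuous_on_eq_continuous_at) (auto simp: open_halfspace_Re_gt)

lemma continuous_on_Phi_vertical: "0 < x \<Longrightarrow> continuous_on A (\<lambda>y. \<Phi> (Complex x y))"
  by (rule continuous_on_compose2[OF continuous_on_Phi continuous_on_Complex_Im]) auto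

lemma continuous_on_Phi_horizontal: "A \<subseteq> {0<..} \<Longrightarrow> continuous_on A (\<lambda>x. \<Phi> (Complex x y))"
  by (rule continuous_on_compose2[OF continuous_on_Phi continuous_on_Complex_Re]) auto

lemma continuous_on_norm_Phi_div_horizontal:
  "0 < a \<Longrightarrow> continuous_on {a..b} (\<lambda>x. cmod (\<Phi> (Complex x t) / Complex x t))"
  by (intro continuous_intros continuous_on_Phi_horizontal continuous_on_Complex_Re)
     (auto simp: complex_eq_iff)

lemma integrable_damped_norm:
  assumes "0 < x"
  shows "integrable lborel (damped_norm x)"
    and "(\<integral>\<^sup>+y. ennreal (damped_norm x y) \<partial>lborel) = ennreal (LINT y|lborel. damped_norm x y)"
proof -
  have "continuous_on UNIV (damped_norm x)"
    unfolding damped_norm_def[abs_def]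
    by (intro continuous_intros continuous_on_Phi_vertical continuous_on_Complex_Im)
       (use assms in \<open>auto simp: complex_eq_iff\<close>)
  then have meas: "damped_norm x \<in> borel_measurable lborel"
    using borel_measurable_continuous_onI by simp
  have "(\<integral>\<^sup>+y. ennreal (damped_norm x y) \<partial>lborel) \<le>
     (SUP x\<in>{x..}. \<integral>\<^sup>+ y. ennreal (cmod (\<Phi> (Complex x y) / Complex x y) * exp (- pi * \<bar>y\<bar>)) \<partial>lborel)"
    unfolding damped_norm_def by (rule SUP_upper2[of x]) auto
  also have "\<dots> < \<infinity>"
    using cond_b[OF assms] .
  finally show int: "integrable lborel (damped_norm x)"
    by (intro integrableI_bounded[OF meas]) (simp add: damped_norm_nonneg)
  show "(\<integral>\<^sup>+y. ennreal (damped_norm x y) \<partial>lborel) = ennreal (LINT y|lborel. damped_norm x y)"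
    by (rule nn_integral_eq_integral[OF int]) (simp add: damped_norm_nonneg)
qed

lemma tendsto_integral_damped_norm: "((\<lambda>x. LINT y|lborel. damped_norm x y) \<longlongrightarrow> 0) at_top"
proof (rule tendsto_ennrealD)
  have "\<forall>\<^sub>F x in at_top. (\<integral>\<^sup>+y. ennreal (damped_norm x y) \<partial>lborel) = ennreal (LINT y|lborel. damped_norm x y)"
    using eventually_gt_at_top[of 0] by eventually_elim (rule integrable_damped_norm(2))
  with cond_c show "((\<lambda>x. ennreal (LINT y|lborel. damped_norm x y)) \<longlongrightarrow> ennreal 0) at_top"
    by (auto simp: damped_norm_def elim: Lim_transform_eventually)
  show "\<forall>\<^sub>F x in at_top. 0 \<le> (LINT y|lborel. damped_norm x y)"
    by (intro always_eventually allI integral_nonneg_AE) (simp add: damped_norm_nonneg)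
qed simp

lemma tendsto_damped_horizontal_integral:
  assumes "0 < a" "a < b" and F: "F = at_top \<or> F = at_bot"
  shows "((\<lambda>t. exp (- pi * \<bar>t\<bar>) * integral {a..b} (\<lambda>x. cmod (\<Phi> (Complex x t) / Complex x t))) \<longlongrightarrow> 0) F"
proof (rule tendsto_ennrealD)
  have int: "(\<lambda>x. cmod (\<Phi> (Complex x t) / Complex x t)) integrable_on {a..b}" for t
    by (rule integrable_continuous_interval[OF continuous_on_norm_Phi_div_horizontal[OF assms(1)]])
  have "(\<integral>\<^sup>+ x\<in>{a..b}. ennreal (cmod (\<Phi> (Complex x t) / Complex x t)) \<partial>lborel)
      = ennreal (integral {a..b} (\<lambda>x. cmod (\<Phi> (Complex x t) / Complex x t)))" for t
    by (rule nn_integral_has_integral_lebesgue'[OF _ integrable_integral[OF int]]) simp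
  then have eq: "ennreal (exp (- pi * \<bar>t\<bar>)) *
      (\<integral>\<^sup>+ x\<in>{a..b}. ennreal (cmod (\<Phi> (Complex x t) / Complex x t)) \<partial>lborel)
    = ennreal (exp (- pi * \<bar>t\<bar>) * integral {a..b} (\<lambda>x. cmod (\<Phi> (Complex x t) / Complex x t)))" for t
    using integral_nonneg[OF int] by (simp add: ennreal_mult)
  then show "((\<lambda>t. ennreal (exp (- pi * \<bar>t\<bar>) *
      integral {a..b} (\<lambda>x. cmod (\<Phi> (Complex x t) / Complex x t)))) \<longlongrightarrow> ennreal 0) F"
    unfolding ennreal_0 using cond_a[OF assms(1,2)] F by (auto simp: eq)
  show "\<forall>\<^sub>F t in F. 0 \<le> exp (- pi * \<bar>t\<bar>) * integral {a..b} (\<lambda>x. cmod (\<Phi> (Complex x t) / Complex x t))"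
    using integral_nonneg[OF int] by (intro always_eventually allI mult_nonneg_nonneg) auto
qed simp

lemma integrable_I_integrand_vertical:
  assumes "0 < x" "cos (pi * x) \<noteq> 0"
    and "\<delta> > 0" "\<And>y. \<delta> \<le> norm (z - Complex x y)" "\<And>y. \<delta> \<le> norm (z + Complex x y)"
  shows "integrable lborel (\<lambda>y. I_integrand \<Phi> z (Complex x y))"
    and "norm (vertical_integral \<Phi> z x) \<le> norm (cos (of_real pi * z)) / (\<bar>cos (pi * x)\<bar> / 2)
           * (8 + 8 * norm z ^ 2 / \<delta>^2) * (LINT y|lborel. damped_norm x y)"
proof -
  define C where "C = norm (cos (of_real pi * z)) / (\<bar>cos (pi * x)\<bar> / 2) * (8 + 8 * norm z ^ 2 / \<delta>^2)"
  have "C \<ge> 0"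
    by (simp add: C_def)
  have cos_nz: "cos (of_real pi * Complex x y) \<noteq> 0" for y
  proof -
    have "0 < \<bar>cos (pi * x)\<bar> / 2 * exp (pi * \<bar>y\<bar>)"
      using assms(2) by simp
    also have "\<dots> \<le> norm (cos (of_real pi * Complex x y))"
      using norm_cos_pi_ge_abs_cos[of "Complex x y"] by simp
    finally show ?thesis
      by auto
  qed
  have "z^2 - Complex x y ^ 2 \<noteq> 0" for y
    using assms(3) assms(4,5)[of y] by (auto simp: power2_eq_iff)
  then have "continuous_on UNIV (\<lambda>y. I_integrand \<Phi> z (Complex x y))"
    unfolding I_integrand_def
    by (intro continuous_intros continuous_on_Phi_vertical continuous_on_Complex_Im assms(1))
       (use cos_nz in auto)
  then have meas: "(\<lambda>y. I_integrand \<Phi> z (Complex x y)) \<in> borel_measurable lborel"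
    using borel_measurable_continuous_onI by simp
  have bound: "norm (I_integrand \<Phi> z (Complex x y)) \<le> C * damped_norm x y" for y
    using norm_I_integrand_le[where w="Complex x y" and m="\<bar>cos (pi * x)\<bar> / 2"]
      norm_cos_pi_ge_abs_cos[of "Complex x y"] assms
    by (auto simp: C_def damped_norm_def complex_eq_iff)
  show int: "integrable lborel (\<lambda>y. I_integrand \<Phi> z (Complex x y))"
    by (rule Bochner_Integration.integrable_bound[OF integrable_mult_right[OF
          integrable_damped_norm(1)[OF assms(1)], of C] meas])
       (use bound \<open>C \<ge> 0\<close> damped_norm_nonneg in \<open>auto simp: abs_of_nonneg\<close>)
  have "norm (vertical_integral \<Phi> z x) \<le> (LINT y|lborel. C * damped_norm x y)"
    unfolding vertical_integral_def
    by (rule Bochner_Integration.integral_norm_bound_integral[OF integrable_mult_right[OF int]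
          integrable_mult_right[OF integrable_damped_norm(1)[OF assms(1)]]])
       (simp add: norm_mult bound)
  then show "norm (vertical_integral \<Phi> z x) \<le> norm (cos (of_real pi * z)) / (\<bar>cos (pi * x)\<bar> / 2)
           * (8 + 8 * norm z ^ 2 / \<delta>^2) * (LINT y|lborel. damped_norm x y)"
    by (simp add: C_def)
qed

lemma integrable_I_integrand_vertical_nat:
  assumes "- 1/2 < Re z" "Re z + 1 \<le> real N"
  shows "integrable lborel (\<lambda>y. I_integrand \<Phi> z (Complex (real N) y))"
    and "norm (vertical_integral \<Phi> z (real N))
           \<le> 2 * norm (cos (of_real pi * z)) * (8 + 32 * norm z ^ 2) * (LINT y|lborel. damped_norm (real N) y)"
proof -
  have "N \<noteq> 0"
    using assms by auto
  then have "1 \<le> real N"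
    by simp
  then have "1/2 < Re z + real N"
    using assms by linarith
  then have "1/2 \<le> norm (z - Complex (real N) y)" "1/2 \<le> norm (z + Complex (real N) y)" for y
    using abs_Re_le_cmod[of "z - Complex (real N) y"] abs_Re_le_cmod[of "z + Complex (real N) y"] assms
    by auto
  moreover have "\<bar>cos (pi * real N)\<bar> = 1" "0 < real N"
    using assms by (simp_all add: mult.commute)
  ultimately show "integrable lborel (\<lambda>y. I_integrand \<Phi> z (Complex (real N) y))"
    and "norm (vertical_integral \<Phi> z (real N))
           \<le> 2 * norm (cos (of_real pi * z)) * (8 + 32 * norm z ^ 2) * (LINT y|lborel. damped_norm (real N) y)"
    using integrable_I_integrand_vertical[of "real N" "1/2" z] by (auto simp: power2_eq_square)
qed

lemma norm_contour_integral_horizontal_le: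
  assumes "0 < a" "a < b" "\<bar>Im z\<bar> + 1 \<le> \<bar>t\<bar>"
  shows "norm (contour_integral (linepath (Complex a t) (Complex b t)) (I_integrand \<Phi> z))
     \<le> 4 * norm (cos (of_real pi * z)) * (8 + 8 * norm z ^ 2) *
        (exp (- pi * \<bar>t\<bar>) * integral {a..b} (\<lambda>x. cmod (\<Phi> (Complex x t) / Complex x t)))"
proof -
  define C where "C = 4 * norm (cos (of_real pi * z)) * (8 + 8 * norm z ^ 2)"
  have far: "1 \<le> norm (z - Complex x t)" "1 \<le> norm (z + Complex x t)" for x
    using abs_Im_le_cmod[of "z - Complex x t"] abs_Im_le_cmod[of "z + Complex x t"] assms(3) by auto
  have cos_nz: "cos (of_real pi * Complex x t) \<noteq> 0" for x
  proof -
    have "0 < 1/4 * exp (pi * \<bar>t\<bar>)"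
      by simp
    also have "\<dots> \<le> norm (cos (of_real pi * Complex x t))"
      using norm_cos_pi_ge_exp[of "Complex x t"] assms(3) by simp
    finally show ?thesis
      by auto
  qed
  have "z^2 - Complex x t ^ 2 \<noteq> 0" for x
    using far[of x] by (auto simp: power2_eq_iff)
  then have cont: "continuous_on {a..b} (\<lambda>x. I_integrand \<Phi> z (Complex x t))"
    unfolding I_integrand_def
    by (intro continuous_intros continuous_on_Phi_horizontal continuous_on_Complex_Re)
       (use cos_nz assms(1) in auto)
  have bound: "norm (I_integrand \<Phi> z (Complex x t))
      \<le> C * (exp (- pi * \<bar>t\<bar>) * cmod (\<Phi> (Complex x t) / Complex x t))" if "x \<in> {a..b}" for x
    using norm_I_integrand_le[where w="Complex x t" and \<delta>=1 and m="1/4"] norm_cos_pi_ge_exp[of "Complex x t"]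
      far[of x] that assms
    by (auto simp: C_def complex_eq_iff mult_ac)
  have "norm (contour_integral (linepath (Complex a t) (Complex b t)) (I_integrand \<Phi> z))
      = norm (integral {a..b} (\<lambda>x. I_integrand \<Phi> z (Complex x t)))"
    by (simp add: contour_integral_linepath_same_Im[OF assms(2)])
  also have "\<dots> \<le> integral {a..b} (\<lambda>x. C * (exp (- pi * \<bar>t\<bar>) * cmod (\<Phi> (Complex x t) / Complex x t)))"
    by (rule Henstock_Kurzweil_Integration.integral_norm_bound_integral[OF
          integrable_continuous_interval[OF cont] integrable_continuous_interval bound])
       (intro continuous_intros continuous_on_norm_Phi_div_horizontal assms(1))
  finally show ?thesis
    by (simp add: C_def)
qed

lemma tendsto_contour_integral_horizontal:
  assumes "0 < a" "a < b" and F: "F = at_top \<or> F = at_bot"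
  shows "((\<lambda>t. contour_integral (linepath (Complex a t) (Complex b t)) (I_integrand \<Phi> z)) \<longlongrightarrow> 0) F"
proof (rule Lim_null_comparison)
  have "\<forall>\<^sub>F t in at_top. \<bar>Im z\<bar> + 1 \<le> \<bar>t\<bar>"
    using eventually_ge_at_top[of "\<bar>Im z\<bar> + 1"] by eventually_elim linarith
  moreover have "\<forall>\<^sub>F t in at_bot. \<bar>Im z\<bar> + 1 \<le> \<bar>t\<bar>"
    using eventually_le_at_bot[of "- (\<bar>Im z\<bar> + 1)"] by eventually_elim linarith
  ultimately have "\<forall>\<^sub>F t in F. \<bar>Im z\<bar> + 1 \<le> \<bar>t\<bar>"
    using F by auto
  then show "\<forall>\<^sub>F t in F. norm (contour_integral (linepath (Complex a t) (Complex b t)) (I_integrand \<Phi> z))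
     \<le> 4 * norm (cos (of_real pi * z)) * (8 + 8 * norm z ^ 2) *
        (exp (- pi * \<bar>t\<bar>) * integral {a..b} (\<lambda>x. cmod (\<Phi> (Complex x t) / Complex x t)))"
    by eventually_elim (rule norm_contour_integral_horizontal_le[OF assms(1,2)])
  show "((\<lambda>t. 4 * norm (cos (of_real pi * z)) * (8 + 8 * norm z ^ 2) *
        (exp (- pi * \<bar>t\<bar>) * integral {a..b} (\<lambda>x. cmod (\<Phi> (Complex x t) / Complex x t)))) \<longlongrightarrow> 0) F"
    by (rule tendsto_mult_right_zero[OF tendsto_damped_horizontal_integral[OF assms]])
qed

section \<open>Shifting the contour to the right\<close>

lemma sum_residues_I_integrand:
  fixes N :: nat and enclosed :: bool and z :: complex
  defines "pts \<equiv> sec_pole ` {1..N} \<union> (if enclosed then {z} else {})"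
  assumes "open S" "S \<subseteq> {w. 0 < Re w}" "pts \<subseteq> S" "I_integrand \<Phi> z holomorphic_on S - pts"
    and "cos (of_real pi * z) \<noteq> 0"
  shows "(\<Sum>p\<in>pts. residue (I_integrand \<Phi> z) p)
      = (\<Sum>n=1..N. K_term \<Phi> z n) + (if enclosed then - \<Phi> z else 0)"
proof -
  have "finite pts"
    by (simp add: pts_def)
  note isolated = holomorphic_on_punctured_open_Diff[OF assms(2) this assms(5)]
  have "residue (I_integrand \<Phi> z) (sec_pole n) = K_term \<Phi> z n" if "n \<in> {1..N}" for n
  proof -
    have pole: "sec_pole n \<in> S"
      using that assms(4) by (auto simp: pts_def)
    then have "isCont \<Phi> (sec_pole n)"
      using assms(3) isCont_Phi by auto
    from residue_I_integrand_sec_pole[OF isolated[OF pole] this assms(6)] show ?thesis .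
  qed
  then have "(\<Sum>p\<in>sec_pole ` {1..N}. residue (I_integrand \<Phi> z) p) = (\<Sum>n=1..N. K_term \<Phi> z n)"
    by (simp add: sum.reindex[OF inj_on_subset[OF inj_sec_pole]])
  moreover have "residue (I_integrand \<Phi> z) z = - \<Phi> z" if enclosed
  proof -
    have pole: "z \<in> S"
      using that assms(4) by (auto simp: pts_def)
    then have "isCont \<Phi> z" "z \<noteq> 0"
      using assms(3) isCont_Phi by auto
    from residue_I_integrand_self[OF isolated[OF pole] this(1) assms(6) this(2)] show ?thesis .
  qed
  moreover have "z \<notin> sec_pole ` {1..N}"
    using assms(6) by auto
  ultimately show ?thesis
    by (simp add: pts_def sum.union_disjoint)
qed

lemma contour_integral_rectpath_I_integrand:
  fixes N :: nat
  assumes "0 < \<beta>" "\<beta> < 1/2" "1 \<le> N" "\<bar>Im z\<bar> < T"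
    and z: "Re z \<noteq> \<beta>" "- \<beta> < Re z" "Re z < real N" "cos (of_real pi * z) \<noteq> 0"
  shows "contour_integral (rectpath (Complex \<beta> (-T)) (Complex (real N) T)) (I_integrand \<Phi> z)
      = 2 * of_real pi * \<i> * ((\<Sum>n=1..N. K_term \<Phi> z n) + (if \<beta> < Re z then - \<Phi> z else 0))"
    and "continuous_on (path_image (rectpath (Complex \<beta> (-T)) (Complex (real N) T))) (I_integrand \<Phi> z)"
proof -
  define a1 where "a1 = Complex \<beta> (-T)"
  define a3 where "a3 = Complex (real N) T"
  \<comment> \<open>The region excludes -z always, and excludes z unless it lies inside the rectangle.\<close>
  define a0 where "a0 = (if \<beta> < Re z then 0 else \<bar>Re z\<bar>)"
  define S where "S = {w. a0 < Re w \<and> Re w < real N + 1/2}"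
  define pts where "pts = sec_pole ` {1..N} \<union> (if \<beta> < Re z then {z} else {})"
  have "0 \<le> a0" "a0 < \<beta>"
    using assms by (auto simp: a0_def)
  then have "S \<subseteq> {w. 0 < Re w}" "cbox a1 a3 \<subseteq> S"
    by (auto simp: S_def a1_def a3_def in_cbox_complex_iff)
  have "open S" "connected S"
    unfolding S_def Collect_conj_eq
    by (auto intro!: open_Int open_halfspace_Re_gt open_halfspace_Re_lt convex_connected
        convex_Int convex_halfspace_Re_gt convex_halfspace_Re_lt)
  have "pts \<subseteq> box a1 a3"
    using assms by (auto simp: pts_def a1_def a3_def in_box_complex_iff)
  then have "pts \<subseteq> S"
    using box_subset_cbox \<open>cbox a1 a3 \<subseteq> S\<close> by blast
  have cos_nz: "cos (of_real pi * w) \<noteq> 0" if "w \<in> S - pts" for w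
  proof
    assume "cos (of_real pi * w) = 0"
    moreover have "0 < Re w"
      using that \<open>S \<subseteq> {w. 0 < Re w}\<close> by auto
    ultimately obtain n where "1 \<le> n" "w = sec_pole n"
      using cos_pi_eq_0_imp_sec_pole by blast
    moreover have "real n - 1/2 < real N + 1/2"
      using that \<open>w = sec_pole n\<close> by (auto simp: S_def)
    ultimately show False
      using that by (auto simp: pts_def)
  qed
  have holo_pts: "I_integrand \<Phi> z holomorphic_on S - pts"
    by (rule I_integrand_holomorphic_on[OF holomorphic_on_subset[OF holo] cos_nz])
       (use \<open>S \<subseteq> {w. 0 < Re w}\<close> z(2) in \<open>auto simp: S_def pts_def a0_def\<close>)
  have "contour_integral (rectpath a1 a3) (I_integrand \<Phi> z) =
      2 * pi * \<i> * (\<Sum>p\<in>pts. residue (I_integrand \<Phi> z) p)"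
    by (rule Residue_theorem_rectpath[OF \<open>open S\<close> \<open>connected S\<close> \<open>cbox a1 a3 \<subseteq> S\<close> _ _ _
          \<open>pts \<subseteq> box a1 a3\<close> holo_pts])
       (use assms in \<open>auto simp: a1_def a3_def pts_def\<close>)
  also have "(\<Sum>p\<in>pts. residue (I_integrand \<Phi> z) p) =
      (\<Sum>n=1..N. K_term \<Phi> z n) + (if \<beta> < Re z then - \<Phi> z else 0)"
    unfolding pts_def
    by (rule sum_residues_I_integrand[OF \<open>open S\<close> \<open>S \<subseteq> _\<close> _ _ z(4)])
       (use \<open>pts \<subseteq> S\<close> holo_pts in \<open>simp_all add: pts_def\<close>)
  finally show "contour_integral (rectpath (Complex \<beta> (-T)) (Complex (real N) T)) (I_integrand \<Phi> z)
      = 2 * of_real pi * \<i> * ((\<Sum>n=1..N. K_term \<Phi> z n) + (if \<beta> < Re z then - \<Phi> z else 0))"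
    by (simp add: a1_def a3_def)
  have "path_image (rectpath a1 a3) \<subseteq> S - pts"
    using \<open>cbox a1 a3 \<subseteq> S\<close> \<open>pts \<subseteq> box a1 a3\<close> assms
    by (auto simp: path_image_rectpath_cbox_minus_box a1_def a3_def)
  then show "continuous_on (path_image (rectpath (Complex \<beta> (-T)) (Complex (real N) T))) (I_integrand \<Phi> z)"
    unfolding a1_def a3_def
    by (rule continuous_on_subset[OF holomorphic_on_imp_continuous_on[OF holo_pts]])
qed

lemma vertical_integral_diff_eq_residues:
  fixes N :: nat
  assumes \<beta>: "0 < \<beta>" "\<beta> < 1/2"
    and z: "Re z \<noteq> \<beta>" "- \<beta> < Re z" "cos (of_real pi * z) \<noteq> 0"
    and N: "1 \<le> N" "Re z + 1 \<le> real N"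
  shows "vertical_integral \<Phi> z (real N) - vertical_integral \<Phi> z \<beta>
       = 2 * of_real pi * \<i> * ((\<Sum>n=1..N. K_term \<Phi> z n) + (if \<beta> < Re z then - \<Phi> z else 0))"
proof -
  define c where "c = 2 * of_real pi * \<i> * ((\<Sum>n=1..N. K_term \<Phi> z n) + (if \<beta> < Re z then - \<Phi> z else 0))"
  define side where "side p q = contour_integral (linepath p q) (I_integrand \<Phi> z)" for p q
  have "0 < pi * \<beta>" "pi * \<beta> < pi / 2"
    using \<beta> by simp_all
  then have "cos (pi * \<beta>) \<noteq> 0"
    using cos_gt_zero_pi[of "pi * \<beta>"] by simp
  moreover have "min \<bar>Re z - \<beta>\<bar> (Re z + \<beta>) \<le> norm (z - Complex \<beta> y)"
    "min \<bar>Re z - \<beta>\<bar> (Re z + \<beta>) \<le> norm (z + Complex \<beta> y)" for y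
    using abs_Re_le_cmod[of "z - Complex \<beta> y"] abs_Re_le_cmod[of "z + Complex \<beta> y"] z(2) by auto
  ultimately have int_left: "integrable lborel (\<lambda>y. I_integrand \<Phi> z (Complex \<beta> y))"
    using z(1,2) by (intro integrable_I_integrand_vertical(1)[OF \<beta>(1)]) auto
  have int_right: "integrable lborel (\<lambda>y. I_integrand \<Phi> z (Complex (real N) y))"
    using z(2) \<beta>(2) N(2) by (intro integrable_I_integrand_vertical_nat(1)) auto
  have "((\<lambda>T. side (Complex \<beta> (-T)) (Complex (real N) (-T)) + side (Complex (real N) (-T)) (Complex (real N) T)
        - side (Complex \<beta> T) (Complex (real N) T) - side (Complex \<beta> (-T)) (Complex \<beta> T))
      \<longlongrightarrow> 0 + vertical_integral \<Phi> z (real N) - 0 - vertical_integral \<Phi> z \<beta>) at_top"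
    unfolding side_def vertical_integral_def using \<beta> N
    by (intro tendsto_intros tendsto_contour_integral_vertical_linepath int_left int_right
        filterlim_compose[OF tendsto_contour_integral_horizontal filterlim_uminus_at_bot_at_top]
        tendsto_contour_integral_horizontal) auto
  moreover have "\<forall>\<^sub>F T in at_top. side (Complex \<beta> (-T)) (Complex (real N) (-T))
      + side (Complex (real N) (-T)) (Complex (real N) T)
      - side (Complex \<beta> T) (Complex (real N) T) - side (Complex \<beta> (-T)) (Complex \<beta> T) = c"
    using eventually_gt_at_top[of "\<bar>Im z\<bar>"]
  proof eventually_elim
    case (elim T)
    have "Re z < real N"
      using N(2) by simp
    note rectangle = contour_integral_rectpath_I_integrand[OF \<beta> N(1) elim z(1,2) this z(3)]
    from contour_integral_rectpath[OF rectangle(2)] rectangle(1) show ?case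
      by (simp add: c_def side_def)
  qed
  ultimately have "((\<lambda>T::real. c) \<longlongrightarrow> 0 + vertical_integral \<Phi> z (real N) - 0 - vertical_integral \<Phi> z \<beta>) at_top"
    by (rule Lim_transform_eventually)
  then show ?thesis
    unfolding c_def by (simp add: tendsto_const_iff)
qed

lemma K_fun_eq_I_fun:
  assumes \<beta>: "0 < \<beta>" "\<beta> < 1/2"
    and z: "Re z \<noteq> \<beta>" "- \<beta> < Re z" "cos (of_real pi * z) \<noteq> 0"
  shows "K_fun \<Phi> z = (if \<beta> < Re z then \<Phi> z else 0) - I_fun \<beta> \<Phi> z"
proof -
  define e where "e = (if \<beta> < Re z then - \<Phi> z else 0)"
  define N0 where "N0 = nat \<lceil>Re z\<rceil> + 2"
  have N0: "1 \<le> N" "Re z + 1 \<le> real N" if "N0 \<le> N" for N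
    using that of_nat_ceiling[of "Re z"] by (auto simp: N0_def)
  have "- 1/2 < Re z"
    using \<beta> z by simp
  have "(\<lambda>N. vertical_integral \<Phi> z (real N)) \<longlonglongrightarrow> 0"
  proof (rule Lim_null_comparison)
    show "\<forall>\<^sub>F N in sequentially. norm (vertical_integral \<Phi> z (real N))
        \<le> 2 * norm (cos (of_real pi * z)) * (8 + 32 * norm z ^ 2) * (LINT y|lborel. damped_norm (real N) y)"
      using eventually_ge_at_top[of N0]
      by eventually_elim (rule integrable_I_integrand_vertical_nat(2)[OF \<open>- 1/2 < Re z\<close> N0(2)])
    show "(\<lambda>N. 2 * norm (cos (of_real pi * z)) * (8 + 32 * norm z ^ 2)
        * (LINT y|lborel. damped_norm (real N) y)) \<longlonglongrightarrow> 0"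
      by (rule tendsto_mult_right_zero[OF filterlim_compose[OF tendsto_integral_damped_norm
            filterlim_real_sequentially]])
  qed
  then have "(\<lambda>N. (vertical_integral \<Phi> z (real N) - vertical_integral \<Phi> z \<beta>) / (2 * of_real pi * \<i>) - e)
      \<longlonglongrightarrow> (0 - vertical_integral \<Phi> z \<beta>) / (2 * of_real pi * \<i>) - e"
    by (intro tendsto_intros) auto
  moreover have "\<forall>\<^sub>F N in sequentially.
      (vertical_integral \<Phi> z (real N) - vertical_integral \<Phi> z \<beta>) / (2 * of_real pi * \<i>) - e
      = (\<Sum>n=1..N. K_term \<Phi> z n)"
    using eventually_ge_at_top[of N0]
    by eventually_elim (simp add: vertical_integral_diff_eq_residues[OF \<beta> z N0] e_def)
  ultimately have "(\<lambda>N. \<Sum>n=1..N. K_term \<Phi> z n)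
      \<longlonglongrightarrow> (0 - vertical_integral \<Phi> z \<beta>) / (2 * of_real pi * \<i>) - e"
    by (rule Lim_transform_eventually)
  then show ?thesis
    unfolding K_fun_eq_lim_K_term I_fun_eq_vertical_integral
    by (auto dest!: limI simp: e_def diff_divide_distrib)
qed

end

theorem lemma3p4:
  fixes \<Phi> :: "complex \<Rightarrow> complex" and \<beta> :: real
  assumes holo: "\<Phi> holomorphic_on {z. Re z > 0}"
    and cond_a: "\<And>a b. 0 < a \<Longrightarrow> a < b \<Longrightarrow>
        ((\<lambda>y. ennreal (exp (- pi * \<bar>y\<bar>)) *
            (\<integral>\<^sup>+ x\<in>{a..b}. ennreal (cmod (\<Phi> (Complex x y) / Complex x y)) \<partial>lborel))
          \<longlongrightarrow> 0) at_top
      \<and> ((\<lambda>y. ennreal (exp (- pi * \<bar>y\<bar>)) *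
            (\<integral>\<^sup>+ x\<in>{a..b}. ennreal (cmod (\<Phi> (Complex x y) / Complex x y)) \<partial>lborel))
          \<longlongrightarrow> 0) at_bot"
    and cond_b: "\<And>\<eta>. \<eta> > 0 \<Longrightarrow>
        (SUP x\<in>{\<eta>..}. \<integral>\<^sup>+ y. ennreal (cmod (\<Phi> (Complex x y) / Complex x y) * exp (- pi * \<bar>y\<bar>)) \<partial>lborel) < \<infinity>"
    and cond_c: "((\<lambda>x. \<integral>\<^sup>+ y. ennreal (cmod (\<Phi> (Complex x y) / Complex x y) * exp (- pi * \<bar>y\<bar>)) \<partial>lborel)
          \<longlongrightarrow> 0) at_top"
    and beta: "0 < \<beta>" "\<beta> < 1/2"
  shows "(\<forall>z. Re z > \<beta> \<longrightarrow> \<Phi> z - K_fun \<Phi> z = I_fun \<beta> \<Phi> z)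
       \<and> (\<forall>z. \<bar>Re z\<bar> < \<beta> \<longrightarrow> - K_fun \<Phi> z = I_fun \<beta> \<Phi> z)"
proof -
  interpret admissible \<Phi>
    using holo cond_a cond_b cond_c by unfold_locales
  show ?thesis
  proof (intro conjI allI impI)
    fix z
    assume z: "\<beta> < Re z"
    show "\<Phi> z - K_fun \<Phi> z = I_fun \<beta> \<Phi> z"
    proof (cases "cos (of_real pi * z) = 0")
      case True
      have "0 < Re z"
        using z beta by simp
      then obtain m where "1 \<le> m" "z = sec_pole m"
        using True by (rule cos_pi_eq_0_imp_sec_pole)
      then show ?thesis
        using True by (simp add: K_fun_at_sec_pole I_fun_def)
    next
      case False
      then show ?thesis
        using K_fun_eq_I_fun[OF beta] z beta by simp
    qed
  next
    fix z
    assume z: "\<bar>Re z\<bar> < \<beta>"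
    then have "cos (of_real pi * z) \<noteq> 0"
      using beta by (intro cos_pi_neq_0_if_abs_Re_less) simp
    then show "- K_fun \<Phi> z = I_fun \<beta> \<Phi> z"
      using K_fun_eq_I_fun[OF beta] z by simp
  qed
qed

end
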